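(* In the setting described in the context, if the operator $-i\,\Sigma^*\circ\Upsilon$ on $K^\partial\oplus K^\partial$ is positive definite, then $P+\varepsilon$ is an isomorphism $\mathcal D(P)\to H_0\oplus H_0$.
   Context: Inner products are linear in the first argument and conjugate-linear in the second. $H_0$ is a separable Hilbert space, $T$ a closed densely defined symmetric operator in $H_0$ with adjoint $T^*$; $H_1\subset H_0$ a dense subspace which is a Hilbert space with bounded inclusion, $H_1\subset\mathcal D(T^* )$. $K^\partial$ is a separable Hilbert space with inner product $\langle\cdot,\cdot\rangle_\partial$, $K\subset K^\partial$ a dense Hilbert subspace, and $\gamma:H_1\to K\oplus K$ a bounded surjective operator with $\mathcal D(T)=\operatorname{Ker}\gamma$. $\Sigma$ is a bounded invertible self-adjoint operator on $K^\partial\oplus K^\partial$ leaving $K\oplus K$ invariant, and $\langle T^*u,v\rangle-\langle u,T^*v\rangle=\langle i\Sigma\gamma u,\gamma v\rangle_\partial$ for all $u,v\in H_1$. $\Upsilon$ is a unitary operator on $K^\partial\oplus K^\partial$ leaving $K\oplus K$ invariant and commuting with $\Sigma$. Let $S=T\oplus(-T)$ in $H_0\oplus H_0$ (domain $\operatorname{Ker}\gamma\oplus\operatorname{Ker}\gamma$), so $S^*=T^*\oplus(-T^* )$. Let $P$ be the restriction of $S^*$ to $\{(a,b)\in H_1\oplus H_1:\gamma b=\Upsilon\gamma a\}$, i.e. $P(a,b)=(T^*a,-T^*b)$ on this domain; assume $P$ is a self-adjoint Fredholm operator in $H_0\oplus H_0$. Let $\varepsilon=\begin{pmatrix}0&1\\1&0\end{pmatrix}$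 on $H_0\oplus H_0$, i.e. $\varepsilon(a,b)=(b,a)$. *)

theory Defs
  imports "HOL-Analysis.Analysis"
begin

text \<open>The library has only real inner product spaces, so we introduce complex Hilbert
spaces as real Banach spaces with a compatible complex scalar multiplication and a
complex inner product, linear in the first and conjugate-linear in the second argument,
inducing the norm.\<close>

class chilbert = banach +
  fixes scaleC :: "complex \<Rightarrow> 'a \<Rightarrow> 'a" (infixr \<open>*\<^sub>C\<close> 75)
    and cinner :: "'a \<Rightarrow> 'a \<Rightarrow> complex"
  assumes scaleC_add_right: "c *\<^sub>C (x + y) = c *\<^sub>C x + c *\<^sub>C y"
    and scaleC_add_left: "(a + b) *\<^sub>C x = a *\<^sub>C x + b *\<^sub>C x"
    and scaleC_scaleC: "a *\<^sub>C (b *\<^sub>C x) = (a * b) *\<^sub>C x"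
    and scaleC_one: "1 *\<^sub>C x = x"
    and scaleR_scaleC: "scaleR r x = complex_of_real r *\<^sub>C x"
    and cinner_add_left: "cinner (x + y) z = cinner x z + cinner y z"
    and cinner_scaleC_left: "cinner (c *\<^sub>C x) y = c * cinner x y"
    and cinner_commute: "cinner y x = cnj (cinner x y)"
    and cinner_self_norm: "cinner x x = complex_of_real ((norm x)\<^sup>2)"

text \<open>Orthogonal direct sum \<open>H \<oplus> H'\<close> is the product type.\<close>

instantiation prod :: (chilbert, chilbert) chilbert
begin

definition scaleC_prod_def:
  "scaleC c x = (scaleC c (fst x), scaleC c (snd x))"

definition cinner_prod_def:
  "cinner x y = cinner (fst x) (fst y) + cinner (snd x) (snd y)"

instance
proof
  fix c a b :: complex and r :: real and x y z :: "'a \<times> 'b"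
  show "c *\<^sub>C (x + y) = c *\<^sub>C x + c *\<^sub>C y"
    by (simp add: scaleC_prod_def scaleC_add_right)
  show "(a + b) *\<^sub>C x = a *\<^sub>C x + b *\<^sub>C x"
    by (simp add: scaleC_prod_def scaleC_add_left)
  show "a *\<^sub>C (b *\<^sub>C x) = (a * b) *\<^sub>C x"
    by (simp add: scaleC_prod_def scaleC_scaleC)
  show "1 *\<^sub>C x = x"
    by (simp add: scaleC_prod_def scaleC_one)
  show "scaleR r x = complex_of_real r *\<^sub>C x"
    by (simp add: scaleC_prod_def scaleR_prod_def scaleR_scaleC)
  show "cinner (x + y) z = cinner x z + cinner y z"
    by (simp add: cinner_prod_def cinner_add_left)
  show "cinner (c *\<^sub>C x) y = c * cinner x y"
    by (simp add: cinner_prod_def scaleC_prod_def cinner_scaleC_left algebra_simps)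
  show "cinner y x = cnj (cinner x y)"
    by (simp add: cinner_prod_def cinner_commute[of "fst y"] cinner_commute[of "snd y"])
  show "cinner x x = complex_of_real ((norm x)\<^sup>2)"
    by (cases x) (simp add: cinner_prod_def cinner_self_norm norm_Pair)
qed

end

definition clinear :: "('a::chilbert \<Rightarrow> 'b::chilbert) \<Rightarrow> bool" where
  "clinear f \<longleftrightarrow> (\<forall>x y. f (x + y) = f x + f y) \<and> (\<forall>c x. f (c *\<^sub>C x) = c *\<^sub>C f x)"

definition bounded_clinear :: "('a::chilbert \<Rightarrow> 'b::chilbert) \<Rightarrow> bool" where
  "bounded_clinear f \<longleftrightarrow> clinear f \<and> (\<exists>C. \<forall>x. norm (f x) \<le> C * norm x)"

definition csubspace :: "'a::chilbert set \<Rightarrow> bool" where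
  "csubspace D \<longleftrightarrow> 0 \<in> D \<and> (\<forall>x\<in>D. \<forall>y\<in>D. x + y \<in> D) \<and> (\<forall>c. \<forall>x\<in>D. c *\<^sub>C x \<in> D)"

text \<open>An operator in \<open>H\<close> is given by its domain \<open>D\<close> and its action \<open>A\<close> on \<open>D\<close>.\<close>

definition linear_op :: "'a::chilbert set \<Rightarrow> ('a \<Rightarrow> 'a) \<Rightarrow> bool" where
  "linear_op D A \<longleftrightarrow> csubspace D \<and>
     (\<forall>x\<in>D. \<forall>y\<in>D. A (x + y) = A x + A y) \<and> (\<forall>c. \<forall>x\<in>D. A (c *\<^sub>C x) = c *\<^sub>C A x)"

definition densely_defined :: "'a::chilbert set \<Rightarrow> ('a \<Rightarrow> 'a) \<Rightarrow> bool" where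
  "densely_defined D A \<longleftrightarrow> linear_op D A \<and> closure D = UNIV"

definition closed_op :: "'a::chilbert set \<Rightarrow> ('a \<Rightarrow> 'a) \<Rightarrow> bool" where
  "closed_op D A \<longleftrightarrow> closed {(x, A x) | x. x \<in> D}"

definition symmetric_op :: "'a::chilbert set \<Rightarrow> ('a \<Rightarrow> 'a) \<Rightarrow> bool" where
  "symmetric_op D A \<longleftrightarrow> densely_defined D A \<and>
     (\<forall>u\<in>D. \<forall>v\<in>D. cinner (A u) v = cinner u (A v))"

text \<open>Domain of the adjoint and the adjoint itself (well defined for densely defined \<open>A\<close>).\<close>

definition adj_dom :: "'a::chilbert set \<Rightarrow> ('a \<Rightarrow> 'a) \<Rightarrow> 'a set" where
  "adj_dom D A = {v. \<exists>w. \<forall>u\<in>D. cinner (A u) v = cinner u w}"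

definition adj :: "'a::chilbert set \<Rightarrow> ('a \<Rightarrow> 'a) \<Rightarrow> 'a \<Rightarrow> 'a" where
  "adj D A v = (SOME w. \<forall>u\<in>D. cinner (A u) v = cinner u w)"

definition self_adjoint_op :: "'a::chilbert set \<Rightarrow> ('a \<Rightarrow> 'a) \<Rightarrow> bool" where
  "self_adjoint_op D A \<longleftrightarrow> densely_defined D A \<and> adj_dom D A = D \<and> (\<forall>v\<in>D. adj D A v = A v)"

definition fin_dim :: "'a::chilbert set \<Rightarrow> bool" where
  "fin_dim V \<longleftrightarrow> (\<exists>F. finite F \<and> (\<forall>v\<in>V. \<exists>c. v = (\<Sum>x\<in>F. c x *\<^sub>C x)))"

definition fin_codim :: "'a::chilbert set \<Rightarrow> bool" where
  "fin_codim V \<longleftrightarrow> (\<exists>F. finite F \<and> (\<forall>y. \<exists>z\<in>V. \<exists>c. y = z + (\<Sum>x\<in>F. c x *\<^sub>C x)))"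

definition fredholm_op :: "'a::chilbert set \<Rightarrow> ('a \<Rightarrow> 'a) \<Rightarrow> bool" where
  "fredholm_op D A \<longleftrightarrow> linear_op D A \<and> closed_op D A \<and> closed (A ` D) \<and>
     fin_dim {x\<in>D. A x = 0} \<and> fin_codim (A ` D)"

definition self_adjoint_bdd :: "('a::chilbert \<Rightarrow> 'a) \<Rightarrow> bool" where
  "self_adjoint_bdd S \<longleftrightarrow> bounded_clinear S \<and> (\<forall>x y. cinner (S x) y = cinner x (S y))"

definition invertible_bdd :: "('a::chilbert \<Rightarrow> 'a) \<Rightarrow> bool" where
  "invertible_bdd S \<longleftrightarrow> bounded_clinear S \<and>
     (\<exists>S'. bounded_clinear S' \<and> S \<circ> S' = id \<and> S' \<circ> S = id)"

definition unitary_bdd :: "('a::chilbert \<Rightarrow> 'a) \<Rightarrow> bool" where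
  "unitary_bdd U \<longleftrightarrow> bounded_clinear U \<and> surj U \<and> (\<forall>x y. cinner (U x) (U y) = cinner x y)"

definition positive_definite :: "('a::chilbert \<Rightarrow> 'a) \<Rightarrow> bool" where
  "positive_definite A \<longleftrightarrow> bounded_clinear A \<and>
     (\<forall>x. x \<noteq> 0 \<longrightarrow> Im (cinner (A x) x) = 0 \<and> Re (cinner (A x) x) > 0)"

end

theory Submission
  imports Defs
begin

text \<open>For \<open>x \<in> \<D>(P)\<close> Green's formula and the boundary condition \<open>\<gamma> b = \<Upsilon> \<gamma> a\<close> turn
\<open>Re \<langle>Px, \<epsilon>x\<rangle>\<close> into \<open>\<langle>-i\<Sigma>\<Upsilon> \<gamma>a, \<gamma>a\<rangle>\<close>, which is nonnegative by hypothesis. Since \<open>\<epsilon>\<close> is a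
self-adjoint isometry this gives \<open>\<parallel>(P + \<epsilon>)x\<parallel>\<^sup>2 \<ge> \<parallel>Px\<parallel>\<^sup>2 + \<parallel>x\<parallel>\<^sup>2\<close>: \<open>P + \<epsilon>\<close> is injective and,
\<open>P\<close> being closed, has closed range. A vector orthogonal to that range lies in
\<open>\<D>(P\<^sup>*) = \<D>(P)\<close> and is annihilated by \<open>P + \<epsilon>\<close>, hence vanishes, so the range is everything
by the projection theorem.\<close>

lemma cinner_zero_left [simp]: "cinner 0 y = 0"
  using cinner_add_left[of 0 0 y] by simp

lemma cinner_zero_right [simp]: "cinner x 0 = 0"
  by (metis cinner_commute cinner_zero_left complex_cnj_zero)

lemma cinner_minus_left: "cinner (- x) y = - cinner x y"
  using cinner_add_left[of x "- x" y] by (simp add: add_eq_0_iff)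

lemma cinner_minus_right: "cinner x (- y) = - cinner x y"
  by (metis cinner_commute cinner_minus_left complex_cnj_minus)

lemma cinner_diff_left: "cinner (x - y) z = cinner x z - cinner y z"
  using cinner_add_left[of x "- y" z] cinner_minus_left[of y z] by simp

lemma cinner_add_right: "cinner x (y + z) = cinner x y + cinner x z"
  by (metis cinner_add_left cinner_commute complex_cnj_add)

lemma cinner_diff_right: "cinner x (y - z) = cinner x y - cinner x z"
  by (metis cinner_commute cinner_diff_left complex_cnj_diff)

lemma cinner_scaleC_right: "cinner x (c *\<^sub>C y) = cnj c * cinner x y"
  by (metis cinner_commute cinner_scaleC_left complex_cnj_mult)

lemma power2_norm_eq_Re_cinner: "(norm x)\<^sup>2 = Re (cinner x x)"
  by (simp add: cinner_self_norm)

lemma Re_cinner_commute: "Re (cinner x y) = Re (cinner y x)"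
  by (subst cinner_commute) simp

lemma power2_norm_add: "(norm (x + y))\<^sup>2 = (norm x)\<^sup>2 + (norm y)\<^sup>2 + 2 * Re (cinner x y)"
  unfolding power2_norm_eq_Re_cinner cinner_add_left cinner_add_right
  using Re_cinner_commute[of y x] by simp

lemma power2_norm_diff: "(norm (x - y))\<^sup>2 = (norm x)\<^sup>2 + (norm y)\<^sup>2 - 2 * Re (cinner x y)"
  unfolding power2_norm_eq_Re_cinner cinner_diff_left cinner_diff_right
  using Re_cinner_commute[of y x] by simp

lemma parallelogram_law:
  fixes x y :: "'a::chilbert"
  shows "(norm (x - y))\<^sup>2 + (norm (x + y))\<^sup>2 = 2 * (norm x)\<^sup>2 + 2 * (norm y)\<^sup>2"
  using power2_norm_add[of x y] power2_norm_diff[of x y] by simp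

lemma power2_norm_scaleC: "(norm (c *\<^sub>C x))\<^sup>2 = (cmod c)\<^sup>2 * (norm x)\<^sup>2"
proof -
  have "cnj c * (c * cinner x x) = (c * cnj c) * cinner x x"
    by (simp only: mult.assoc[symmetric] mult.commute[of "cnj c" c])
  also have "\<dots> = of_real ((cmod c)\<^sup>2 * (norm x)\<^sup>2)"
    by (simp only: complex_norm_square[symmetric] cinner_self_norm of_real_mult)
  finally show ?thesis
    unfolding power2_norm_eq_Re_cinner cinner_scaleC_left cinner_scaleC_right by simp
qed

lemma scaleC_minus_one: "(- 1) *\<^sub>C (x::'a::chilbert) = - x"
  by (metis scaleR_minus1_left scaleR_scaleC of_real_1 of_real_minus)

lemma power2_norm_add_ge:
  assumes "0 \<le> Re (cinner x y)"
  shows "(norm x)\<^sup>2 + (norm y)\<^sup>2 \<le> (norm (x + y))\<^sup>2"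
  using assms power2_norm_add[of x y] by simp

lemma bounded_clinear_imp_bounded_linear:
  assumes "bounded_clinear f"
  shows "bounded_linear f"
proof
  have f: "clinear f" and "\<exists>C. \<forall>x. norm (f x) \<le> C * norm x"
    using assms unfolding bounded_clinear_def by auto
  then obtain C where C: "\<And>x. norm (f x) \<le> C * norm x" by blast
  show "f (x + y) = f x + f y" for x y
    using f unfolding clinear_def by blast
  show "f (scaleR r x) = scaleR r (f x)" for r x
    using f unfolding clinear_def by (simp add: scaleR_scaleC)
  show "\<exists>K. \<forall>x. norm (f x) \<le> norm x * K"
    using C by (metis mult.commute)
qed

lemma csubspace_scaleR: "csubspace R \<Longrightarrow> x \<in> R \<Longrightarrow> scaleR r x \<in> R"
  unfolding csubspace_def by (simp add: scaleR_scaleC)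

lemma csubspace_diff: "csubspace R \<Longrightarrow> x \<in> R \<Longrightarrow> y \<in> R \<Longrightarrow> x - y \<in> R"
  unfolding csubspace_def by (metis diff_conv_add_uminus scaleC_minus_one)

lemma midpoint_parallelogram_bound:
  fixes y u v :: "'a::chilbert"
  assumes "0 \<le> d" and "d \<le> norm (y - scaleR (1/2) (u + v))"
  shows "(norm (u - v))\<^sup>2 \<le> 2 * (norm (y - u))\<^sup>2 + 2 * (norm (y - v))\<^sup>2 - 4 * d\<^sup>2"
proof -
  have "(y - u) + (y - v) = scaleR 2 (y - scaleR (1/2) (u + v))"
    by (simp add: algebra_simps scaleR_2)
  then have "2 * d \<le> norm ((y - u) + (y - v))"
    using assms(2) by simp
  then have "(2 * d)\<^sup>2 \<le> (norm ((y - u) + (y - v)))\<^sup>2"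
    using assms(1) by (intro power_mono) auto
  moreover have "(y - v) - (y - u) = u - v" by simp
  ultimately show ?thesis
    using parallelogram_law[of "y - v" "y - u"] by (simp add: power_mult_distrib add.commute)
qed

lemma Cauchy_if_dist_le_sum_inverse:
  fixes r :: "nat \<Rightarrow> 'a::metric_space"
  assumes "\<And>m n. (dist (r m) (r n))\<^sup>2 \<le> 2 * inverse (real (Suc m)) + 2 * inverse (real (Suc n))"
  shows "Cauchy r"
proof (rule metric_CauchyI)
  fix e :: real assume e: "0 < e"
  obtain N :: nat where N: "4 / e\<^sup>2 < real (Suc N)"
    using reals_Archimedean2 by (metis less_Suc_eq of_nat_Suc add.commute less_add_one less_trans)
  then have eN: "4 * inverse (real (Suc N)) < e\<^sup>2"
    using e by (simp add: field_simps)
  have "dist (r m) (r n) < e" if "N \<le> m" "N \<le> n" for m n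
  proof -
    have inv_le: "inverse (real (Suc k)) \<le> inverse (real (Suc N))" if "N \<le> k" for k
      using that by (simp add: le_imp_inverse_le)
    have "(dist (r m) (r n))\<^sup>2 < e\<^sup>2"
      using assms[of m n] eN inv_le[OF \<open>N \<le> m\<close>] inv_le[OF \<open>N \<le> n\<close>] by linarith
    then show ?thesis
      using e by (simp add: power_less_imp_less_base)
  qed
  then show "\<exists>M. \<forall>m\<ge>M. \<forall>n\<ge>M. dist (r m) (r n) < e" by blast
qed

lemma closed_csubspace_nearest_point:
  fixes R :: "'a::chilbert set"
  assumes "closed R" and R: "csubspace R"
  shows "\<exists>p\<in>R. \<forall>q\<in>R. norm (y - p) \<le> norm (y - q)"
proof -
  define d where "d = Inf ((\<lambda>r. norm (y - r)) ` R)"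
  have R0: "0 \<in> R" using R unfolding csubspace_def by blast
  have bdd: "bdd_below ((\<lambda>r. norm (y - r)) ` R)"
    by (rule bdd_belowI[of _ 0]) auto
  have d_le: "d \<le> norm (y - q)" if "q \<in> R" for q
    unfolding d_def using bdd that by (intro cInf_lower) auto
  have d0: "0 \<le> d" unfolding d_def using R0 by (intro cInf_greatest) auto
  define b where "b n = d\<^sup>2 + inverse (real (Suc n))" for n
  have "\<exists>r\<in>R. (norm (y - r))\<^sup>2 < b n" for n
  proof -
    have "d < sqrt (b n)"
      using d0 by (simp add: b_def real_less_rsqrt)
    then obtain r where r: "r \<in> R" "norm (y - r) < sqrt (b n)"
      unfolding d_def using R0 by (subst (asm) cInf_less_iff) (auto simp: bdd)
    have "(norm (y - r))\<^sup>2 < (sqrt (b n))\<^sup>2"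
      using r(2) by (intro power_strict_mono) auto
    also have "\<dots> = b n" using d0 by (simp add: b_def)
    finally show ?thesis using r(1) by blast
  qed
  then obtain r where rR: "\<And>n. r n \<in> R" and rb: "\<And>n. (norm (y - r n))\<^sup>2 < b n"
    by metis
  have "Cauchy r"
  proof (rule Cauchy_if_dist_le_sum_inverse)
    fix m n
    have "r m + r n \<in> R" using R rR unfolding csubspace_def by blast
    then have "scaleR (1/2) (r m + r n) \<in> R" by (rule csubspace_scaleR[OF R])
    then have "(norm (r m - r n))\<^sup>2 \<le> 2 * (norm (y - r m))\<^sup>2 + 2 * (norm (y - r n))\<^sup>2 - 4 * d\<^sup>2"
      by (intro midpoint_parallelogram_bound[OF d0] d_le)
    then show "(dist (r m) (r n))\<^sup>2 \<le> 2 * inverse (real (Suc m)) + 2 * inverse (real (Suc n))"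
      using rb[of m] rb[of n] unfolding dist_norm b_def by linarith
  qed
  then obtain p where lim: "r \<longlonglongrightarrow> p"
    using Cauchy_convergent convergent_def by blast
  have "p \<in> R" using closed_sequentially[OF assms(1)] rR lim by blast
  have "(\<lambda>n. (norm (y - r n))\<^sup>2) \<longlonglongrightarrow> (norm (y - p))\<^sup>2"
    by (intro tendsto_intros lim)
  moreover have "b \<longlonglongrightarrow> d\<^sup>2 + 0"
    unfolding b_def by (intro tendsto_intros LIMSEQ_inverse_real_of_nat)
  ultimately have "(norm (y - p))\<^sup>2 \<le> d\<^sup>2 + 0"
    using rb by (intro LIMSEQ_le) (auto intro: less_imp_le)
  then have "(norm (y - p))\<^sup>2 \<le> d\<^sup>2" by simp
  then have "norm (y - p) \<le> d"
    using d0 by (rule power2_le_imp_le)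
  have "norm (y - p) \<le> norm (y - q)" if "q \<in> R" for q
    using \<open>norm (y - p) \<le> d\<close> d_le[OF that] by (rule order.trans)
  with \<open>p \<in> R\<close> show ?thesis by blast
qed

lemma nearest_point_orthogonal:
  fixes R :: "'a::chilbert set"
  assumes R: "csubspace R" and "p \<in> R" and near: "\<forall>q\<in>R. norm (y - p) \<le> norm (y - q)"
    and "q \<in> R"
  shows "cinner (y - p) q = 0"
proof (rule ccontr)
  define w where "w = y - p"
  define c where "c = cinner w q"
  assume "cinner (y - p) q \<noteq> 0"
  then have "0 < (cmod c)\<^sup>2" by (simp add: c_def w_def)
  define s where "s = 1 / ((norm q)\<^sup>2 + 1)"
  have "0 < (norm q)\<^sup>2 + 1" by (simp add: add_nonneg_pos)
  then have s: "0 < s" "s * (norm q)\<^sup>2 < 1"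
    by (simp_all add: s_def field_simps)
  \<comment> \<open>move \<open>p\<close> a little in the direction of \<open>q\<close>, rotated by the phase of \<open>\<langle>w, q\<rangle>\<close>\<close>
  define t where "t = complex_of_real s * c"
  have "p + t *\<^sub>C q \<in> R" using R \<open>p \<in> R\<close> \<open>q \<in> R\<close> unfolding csubspace_def by blast
  then have "norm w \<le> norm (w - t *\<^sub>C q)"
    using near by (force simp: w_def algebra_simps)
  then have "(norm w)\<^sup>2 \<le> (norm (w - t *\<^sub>C q))\<^sup>2" by (simp add: power_mono)
  also have "\<dots> = (norm w)\<^sup>2 + (cmod t)\<^sup>2 * (norm q)\<^sup>2 - 2 * Re (cinner w (t *\<^sub>C q))"
    by (simp add: power2_norm_diff power2_norm_scaleC)
  also have "cinner w (t *\<^sub>C q) = of_real s * (c * cnj c)"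
    by (simp add: cinner_scaleC_right t_def c_def[symmetric] mult.commute mult.left_commute)
  also have "\<dots> = complex_of_real (s * (cmod c)\<^sup>2)"
    by (simp only: complex_norm_square[symmetric] of_real_mult)
  also have "(cmod t)\<^sup>2 = s\<^sup>2 * (cmod c)\<^sup>2"
    using s by (simp add: t_def norm_mult power_mult_distrib)
  finally have "0 \<le> s * (cmod c)\<^sup>2 * (s * (norm q)\<^sup>2 - 2)"
    by (simp add: algebra_simps power2_eq_square)
  moreover have "0 < s * (cmod c)\<^sup>2" using s \<open>0 < (cmod c)\<^sup>2\<close> by simp
  ultimately have "0 \<le> s * (norm q)\<^sup>2 - 2" by (simp add: zero_le_mult_iff)
  with s show False by simp
qed

lemma closed_csubspace_orthogonal_decomposition:
  fixes R :: "'a::chilbert set"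
  assumes "closed R" and "csubspace R"
  shows "\<exists>p\<in>R. \<forall>q\<in>R. cinner (y - p) q = 0"
  using closed_csubspace_nearest_point[OF assms] nearest_point_orthogonal[OF assms(2)] by blast

lemma orthogonal_dense_eq_zero:
  assumes "closure D = UNIV" and "\<forall>u\<in>D. cinner u v = 0"
  shows "v = 0"
proof (rule ccontr)
  assume "v \<noteq> 0"
  moreover have "v \<in> closure D" using assms(1) by simp
  ultimately obtain u where u: "u \<in> D" "dist u v < norm v"
    by (metis closure_approachable zero_less_norm_iff)
  have "(norm (u - v))\<^sup>2 = (norm u)\<^sup>2 + (norm v)\<^sup>2"
    using power2_norm_diff[of u v] assms(2) u(1) by simp
  then have "norm v \<le> norm (u - v)"
    by (metis le_add_same_cancel2 zero_le_power2 power2_le_imp_le norm_ge_zero)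
  with u(2) show False by (simp add: dist_norm)
qed

lemma linear_op_diff:
  assumes "linear_op D A" and "x \<in> D" "y \<in> D"
  shows "x - y \<in> D" and "A (x - y) = A x - A y"
proof -
  have D: "csubspace D" and add: "\<forall>x\<in>D. \<forall>y\<in>D. A (x + y) = A x + A y"
    and sc: "\<forall>c. \<forall>x\<in>D. A (c *\<^sub>C x) = c *\<^sub>C A x"
    using assms(1) unfolding linear_op_def by auto
  show "x - y \<in> D" using csubspace_diff[OF D assms(2,3)] .
  have "(- 1) *\<^sub>C y \<in> D" using D assms(3) unfolding csubspace_def by blast
  then have "A (x + (- 1) *\<^sub>C y) = A x + (- 1) *\<^sub>C A y"
    using add sc assms(2,3) by simp
  then show "A (x - y) = A x - A y" by (simp add: scaleC_minus_one)
qed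

lemma csubspace_image_linear_op:
  assumes "linear_op D A"
  shows "csubspace (A ` D)"
proof -
  have D: "csubspace D" and add: "\<forall>x\<in>D. \<forall>y\<in>D. A (x + y) = A x + A y"
    and sc: "\<forall>c. \<forall>x\<in>D. A (c *\<^sub>C x) = c *\<^sub>C A x"
    using assms unfolding linear_op_def by auto
  have "0 \<in> D" using D unfolding csubspace_def by blast
  then have "A 0 = A 0 + A 0" using add by (metis add_0)
  then have "0 \<in> A ` D" using \<open>0 \<in> D\<close> by (metis add_cancel_right_right image_eqI)
  moreover have "A x + A y \<in> A ` D" if "x \<in> D" "y \<in> D" for x y
    using add D that unfolding csubspace_def by (metis image_eqI)
  moreover have "c *\<^sub>C A x \<in> A ` D" if "x \<in> D" for c x
    using sc D that unfolding csubspace_def by (metis image_eqI)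
  ultimately show ?thesis unfolding csubspace_def by blast
qed

lemma linear_op_plus_bounded_linear:
  assumes "linear_op D A" and "bounded_clinear E"
  shows "linear_op D (\<lambda>x. A x + E x)"
  using assms unfolding linear_op_def bounded_clinear_def clinear_def
  by (simp add: algebra_simps scaleC_add_right)

lemma Cauchy_if_dist_le_mult:
  fixes a :: "nat \<Rightarrow> 'a::metric_space" and f :: "nat \<Rightarrow> 'b::metric_space"
  assumes "Cauchy f" and "0 < C" and "\<And>m n. dist (a m) (a n) \<le> C * dist (f m) (f n)"
  shows "Cauchy a"
proof (rule metric_CauchyI)
  fix e :: real assume "0 < e"
  then obtain M where "\<forall>m\<ge>M. \<forall>n\<ge>M. dist (f m) (f n) < e / C"
    using assms(1,2) metric_CauchyD by (metis divide_pos_pos)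
  then have "\<forall>m\<ge>M. \<forall>n\<ge>M. C * dist (f m) (f n) < e"
    using assms(2) by (simp add: field_simps)
  then show "\<exists>M. \<forall>m\<ge>M. \<forall>n\<ge>M. dist (a m) (a n) < e"
    using assms(3) by (meson le_less_trans)
qed

lemma closed_image_if_graph_norm_bounded:
  assumes A: "linear_op D A" and "closed_op D A" and E: "bounded_clinear E" and "0 < C"
    and bound: "\<forall>x\<in>D. norm x + norm (A x) \<le> C * norm (A x + E x)"
  shows "closed ((\<lambda>x. A x + E x) ` D)"
  unfolding closed_sequential_limits
proof (intro allI impI, elim conjE)
  define Q where "Q x = A x + E x" for x
  have E_lin: "bounded_linear E" using E by (rule bounded_clinear_imp_bounded_linear)
  fix f l assume "\<forall>n. f n \<in> Q ` D" and fl: "f \<longlonglongrightarrow> l"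
  then have "\<forall>n. \<exists>u. u \<in> D \<and> f n = Q u" by blast
  then obtain x where "\<forall>n. x n \<in> D \<and> f n = Q (x n)" by metis
  then have xD: "\<And>n. x n \<in> D" and fx: "\<And>n. f n = Q (x n)" by auto
  have dist_le: "dist (x m) (x n) \<le> C * dist (f m) (f n)"
    "dist (A (x m)) (A (x n)) \<le> C * dist (f m) (f n)" for m n
  proof -
    have "f m - f n = A (x m - x n) + E (x m - x n)"
      by (simp add: fx Q_def linear_op_diff(2)[OF A xD xD] linear_diff[OF bounded_linear.linear[OF E_lin]])
    then have "norm (x m - x n) + norm (A (x m) - A (x n)) \<le> C * dist (f m) (f n)"
      using bound[rule_format, OF linear_op_diff(1)[OF A xD xD, of m n]]
      by (simp add: dist_norm linear_op_diff(2)[OF A xD xD])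
    then show "dist (x m) (x n) \<le> C * dist (f m) (f n)"
      "dist (A (x m)) (A (x n)) \<le> C * dist (f m) (f n)"
      using norm_ge_zero[of "x m - x n"] norm_ge_zero[of "A (x m) - A (x n)"]
      unfolding dist_norm by linarith+
  qed
  have "Cauchy f" using fl by (rule LIMSEQ_imp_Cauchy)
  then have "Cauchy x" and "Cauchy (\<lambda>n. A (x n))"
    using Cauchy_if_dist_le_mult[OF _ \<open>0 < C\<close> dist_le(1)]
      Cauchy_if_dist_le_mult[OF _ \<open>0 < C\<close> dist_le(2)] by simp_all
  then obtain u z where xu: "x \<longlonglongrightarrow> u" and Az: "(\<lambda>n. A (x n)) \<longlonglongrightarrow> z"
    unfolding Cauchy_convergent_iff convergent_def by blast
  have graph: "closed {(x, A x) | x. x \<in> D}"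
    using \<open>closed_op D A\<close> unfolding closed_op_def .
  have graph_seq: "(x n, A (x n)) \<in> {(x, A x) | x. x \<in> D}" for n
    using xD by blast
  have "(\<lambda>n. (x n, A (x n))) \<longlonglongrightarrow> (u, z)" using xu Az by (rule tendsto_Pair)
  with graph graph_seq have "(u, z) \<in> {(x, A x) | x. x \<in> D}"
    by (rule closed_sequentially)
  then have "u \<in> D" and "z = A u" by auto
  have "f \<longlonglongrightarrow> Q u"
    unfolding fx Q_def \<open>z = A u\<close>[symmetric]
    by (intro tendsto_add Az bounded_linear.tendsto[OF E_lin] xu)
  then have "l = Q u" using fl LIMSEQ_unique by blast
  with \<open>u \<in> D\<close> show "l \<in> Q ` D" by blast
qed

lemma orthogonal_image_self_adjoint_plus:
  assumes A: "self_adjoint_op D A" and E: "\<forall>x y. cinner (E x) y = cinner x (E y)"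
    and orth: "\<forall>x\<in>D. cinner (A x + E x) w = 0"
  shows "w \<in> D" and "A w + E w = 0"
proof -
  have A_adj: "\<forall>x\<in>D. cinner (A x) w = cinner x (- E w)"
    using orth E by (simp add: cinner_add_left cinner_minus_right eq_neg_iff_add_eq_0)
  then have "w \<in> adj_dom D A" unfolding adj_dom_def by blast
  then show "w \<in> D" using A unfolding self_adjoint_op_def by blast
  then have "adj D A w = A w" using A unfolding self_adjoint_op_def by blast
  moreover have "\<forall>x\<in>D. cinner (A x) w = cinner x (adj D A w)"
    unfolding adj_def using A_adj by (rule someI)
  ultimately have "\<forall>x\<in>D. cinner x (A w) = cinner x (- E w)"
    using A_adj by simp
  then have "\<forall>x\<in>D. cinner x (A w + E w) = 0"
    by (simp add: cinner_add_right cinner_minus_right)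
  moreover have "closure D = UNIV"
    using A unfolding self_adjoint_op_def densely_defined_def by blast
  ultimately show "A w + E w = 0" using orthogonal_dense_eq_zero by blast
qed

lemma self_adjoint_plus_isometry_bij:
  assumes A: "self_adjoint_op D A" "closed_op D A"
    and E: "bounded_clinear E" "\<forall>x. norm (E x) = norm x" "\<forall>x y. cinner (E x) y = cinner x (E y)"
    and accretive: "\<forall>x\<in>D. 0 \<le> Re (cinner (A x) (E x))"
  shows "bij_betw (\<lambda>x. A x + E x) D UNIV \<and> (\<forall>x\<in>D. norm x + norm (A x) \<le> 2 * norm (A x + E x))"
proof -
  define Q where "Q x = A x + E x" for x
  have A_lin: "linear_op D A"
    using A unfolding self_adjoint_op_def densely_defined_def by blast
  have Q_lin: "linear_op D Q"
    unfolding Q_def using A_lin E(1) by (rule linear_op_plus_bounded_linear)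
  have Q_ge: "norm x \<le> norm (Q x) \<and> norm (A x) \<le> norm (Q x)" if "x \<in> D" for x
  proof -
    have "(norm (A x))\<^sup>2 + (norm x)\<^sup>2 \<le> (norm (Q x))\<^sup>2"
      using power2_norm_add_ge[of "A x" "E x"] accretive that E(2) by (simp add: Q_def)
    then have "(norm x)\<^sup>2 \<le> (norm (Q x))\<^sup>2" and "(norm (A x))\<^sup>2 \<le> (norm (Q x))\<^sup>2"
      using zero_le_power2[of "norm x"] zero_le_power2[of "norm (A x)"] by linarith+
    then show ?thesis by (auto intro: power2_le_imp_le)
  qed
  then have bound: "\<forall>x\<in>D. norm x + norm (A x) \<le> 2 * norm (Q x)" by fastforce
  have "inj_on Q D"
  proof (rule inj_onI)
    fix x y assume "x \<in> D" "y \<in> D" "Q x = Q y"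
    then show "x = y"
      using Q_ge[OF linear_op_diff(1)[OF Q_lin]] linear_op_diff(2)[OF Q_lin] by fastforce
  qed
  moreover have "Q ` D = UNIV"
  proof (intro set_eqI iffI)
    fix y :: 'a
    have "closed (Q ` D)" and "csubspace (Q ` D)"
      using closed_image_if_graph_norm_bounded[OF A_lin A(2) E(1) _ bound[unfolded Q_def]]
        csubspace_image_linear_op[OF Q_lin] by (simp_all add: Q_def)
    then obtain p where p: "p \<in> Q ` D" and "\<forall>q\<in>Q ` D. cinner (y - p) q = 0"
      using closed_csubspace_orthogonal_decomposition by blast
    then have "\<forall>x\<in>D. cinner (Q x) (y - p) = 0"
      by (metis cinner_commute complex_cnj_zero image_eqI)
    then have "y - p \<in> D" and "Q (y - p) = 0"
      using orthogonal_image_self_adjoint_plus[OF A(1) E(3)] unfolding Q_def by blast+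
    then have "y = p" using Q_ge[of "y - p"] by simp
    with p show "y \<in> Q ` D" by simp
  qed simp
  ultimately show ?thesis using bound unfolding Q_def bij_betw_def by blast
qed

lemma norm_swap: "norm (prod.swap x) = norm x"
  by (cases x) (simp add: norm_Pair add.commute)

lemma cinner_swap: "cinner (prod.swap x) y = cinner x (prod.swap y)"
  by (simp add: cinner_prod_def add.commute)

lemma bounded_clinear_swap: "bounded_clinear prod.swap"
  unfolding bounded_clinear_def clinear_def
  by (auto simp: scaleC_prod_def norm_swap intro: exI[of _ 1])

lemma Re_cinner_boundary_form_nonneg:
  assumes Green: "\<forall>u v. cinner (S (\<iota> u)) (\<iota> v) - cinner (\<iota> u) (S (\<iota> v))
                   = cinner (\<i> *\<^sub>C \<Sigma> (j (\<gamma> u))) (j (\<gamma> v))"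
    and pos: "positive_definite (\<lambda>x. (- \<i>) *\<^sub>C \<Sigma> (\<Upsilon> x))"
    and bc: "j (\<gamma> b) = \<Upsilon> (j (\<gamma> a))"
  shows "0 \<le> Re (cinner (S (\<iota> a), - S (\<iota> b)) (\<iota> b, \<iota> a))"
proof -
  define g where "g = j (\<gamma> a)"
  define X where "X = cinner (\<Sigma> (\<Upsilon> g)) g"
  have "\<forall>x. x \<noteq> 0 \<longrightarrow> 0 < Re (cinner ((- \<i>) *\<^sub>C \<Sigma> (\<Upsilon> x)) x)"
    using pos unfolding positive_definite_def by blast
  then have "0 \<le> Re (cinner ((- \<i>) *\<^sub>C \<Sigma> (\<Upsilon> g)) g)"
    by (cases "g = 0") (simp_all add: less_imp_le)
  then have "0 \<le> Im X" by (simp add: X_def cinner_scaleC_left)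
  have Green_ba: "cinner (S (\<iota> b)) (\<iota> a) - cinner (\<iota> b) (S (\<iota> a)) = \<i> * X"
    using Green[rule_format, of b a] bc by (simp add: g_def X_def cinner_scaleC_left)
  have "Re (cinner (S (\<iota> b)) (\<iota> a)) - Re (cinner (\<iota> b) (S (\<iota> a))) = - Im X"
    using arg_cong[where f=Re, OF Green_ba] by simp
  moreover have "cinner (S (\<iota> a), - S (\<iota> b)) (\<iota> b, \<iota> a) = cinner (S (\<iota> a)) (\<iota> b) - cinner (S (\<iota> b)) (\<iota> a)"
    by (simp add: cinner_prod_def cinner_minus_left)
  ultimately show ?thesis
    using \<open>0 \<le> Im X\<close> Re_cinner_commute[of "S (\<iota> a)" "\<iota> b"] by simp
qed

theorem theorem8p2:
  fixes DT :: "'h::{chilbert, second_countable_topology} set"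
    and T :: "'h \<Rightarrow> 'h"
    and incl1 :: "'h1::{chilbert, second_countable_topology} \<Rightarrow> 'h"
    and inclK :: "'k::{chilbert, second_countable_topology} \<Rightarrow> 'd::{chilbert, second_countable_topology}"
    and \<gamma> :: "'h1 \<Rightarrow> 'k \<times> 'k"
    and \<Sigma> :: "'d \<times> 'd \<Rightarrow> 'd \<times> 'd"
    and \<Upsilon> :: "'d \<times> 'd \<Rightarrow> 'd \<times> 'd"
  defines "jj \<equiv> map_prod inclK inclK"
  defines "Tst \<equiv> adj DT T"
  defines "DP \<equiv> {(incl1 a, incl1 b) | a b. jj (\<gamma> b) = \<Upsilon> (jj (\<gamma> a))}"
  defines "P \<equiv> (\<lambda>(x, y). (Tst x, - Tst y))"
  defines "\<epsilon> \<equiv> (\<lambda>(x::'h, y::'h). (y, x))"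
  assumes T_closed: "closed_op DT T"
    and T_symm: "symmetric_op DT T"
    and H1_incl: "bounded_clinear incl1" "inj incl1" "closure (range incl1) = UNIV"
    and H1_sub: "range incl1 \<subseteq> adj_dom DT T"
    and K_incl: "bounded_clinear inclK" "inj inclK" "closure (range inclK) = UNIV"
    and \<gamma>_bdd: "bounded_clinear \<gamma>" and \<gamma>_surj: "surj \<gamma>"
    and DT_ker: "DT = incl1 ` {u. \<gamma> u = 0}"
    and \<Sigma>_inv: "invertible_bdd \<Sigma>" and \<Sigma>_sa: "self_adjoint_bdd \<Sigma>"
    and \<Sigma>_KK: "\<Sigma> ` range jj \<subseteq> range jj"
    and Green: "\<forall>u v. cinner (Tst (incl1 u)) (incl1 v) - cinner (incl1 u) (Tst (incl1 v))
                   = cinner (\<i> *\<^sub>C \<Sigma> (jj (\<gamma> u))) (jj (\<gamma> v))"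
    and \<Upsilon>_unitary: "unitary_bdd \<Upsilon>" and \<Upsilon>_KK: "\<Upsilon> ` range jj \<subseteq> range jj"
    and \<Upsilon>_comm: "\<Sigma> \<circ> \<Upsilon> = \<Upsilon> \<circ> \<Sigma>"
    and P_sa: "self_adjoint_op DP P" and P_fred: "fredholm_op DP P"
    and pos: "positive_definite (\<lambda>x. (- \<i>) *\<^sub>C \<Sigma> (\<Upsilon> x))"
  shows "bij_betw (\<lambda>x. P x + \<epsilon> x) DP UNIV \<and>
         (\<exists>C. \<forall>x\<in>DP. norm x + norm (P x) \<le> C * norm (P x + \<epsilon> x))"
proof -
  have "\<epsilon> = prod.swap" by (auto simp: \<epsilon>_def)
  have "closed_op DP P" using P_fred unfolding fredholm_op_def by blast
  moreover have "\<forall>x\<in>DP. 0 \<le> Re (cinner (P x) (prod.swap x))"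
    using Re_cinner_boundary_form_nonneg[where S=Tst and \<iota>=incl1 and j=jj, OF Green pos]
    by (auto simp: DP_def P_def)
  ultimately have "bij_betw (\<lambda>x. P x + prod.swap x) DP UNIV \<and>
      (\<forall>x\<in>DP. norm x + norm (P x) \<le> 2 * norm (P x + prod.swap x))"
    using P_sa bounded_clinear_swap norm_swap cinner_swap
    by (intro self_adjoint_plus_isometry_bij) auto
  with \<open>\<epsilon> = prod.swap\<close> show ?thesis by blast
qed

end
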